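(* Let $(S,\mathcal C)$ be a connected connectoid and $T$ a normal tree of $(S,\mathcal C)$ rooted at $r$. Suppose every component in $\mathcal K(S\setminus V(T))$ has finite adhesion to $V(T)$. For every $K\in\mathcal K(S\setminus V(T))$ let $T_K$ be a (possibly empty) normal tree of the induced subconnectoid on $K$. Then there is a normal tree $T'$ of $(S,\mathcal C)$ rooted at $r$ with $T\subseteq T'$ such that $T'-T$ is the disjoint union of the trees $T_K$, $K\in\mathcal K(S\setminus V(T))$. Furthermore, if $T$ and all $T_K$ are rayless, then $T'$ is rayless.
   Context: A connectoid is given by a set $S$ and a set $\mathcal F$ of finite subsets of $S$ such that (i) $F\cup F'\in\mathcal F$ whenever $F,F'\in\mathcal F$ and $F\cap F'\neq\emptyset$, and (ii) $\emptyset\in\mathcal F$ and $\{s\}\in\mathcal F$ for every $s\in S$. A set $C\subseteq S$ is connected if for all $x,y\in C$ there is $F\in\mathcal F$ with $F\subseteq C$ and $x,y\in F$; $\mathcal C$ is the set of connected sets; $(S,\mathcal C)$ is connected if $S\in\mathcal C$. For $S'\subseteq S$, a component of $S'$ is a maximal connected subset, $\mathcal K(S')$ is the set of components, and the induced subconnectoid on $S'$ is $(S',\mathcal C\cap\mathcal P(S'))$. A component $K\in\mathcal K(S\setminus\hat S)$ has finite adhesion to $\hat S$ if there is a finite $X\subseteq\hat S$ with $K\in\mathcal K(S\setminus X)$. A necklace is a connected set $N$ for which there is a family $(H_n)_{n\in\mathbb N}$ of finite connected sets with $N=\bigcup_n H_n$ and $H_i\cap H_j\neq\emptyset$ iff $|i-j|\le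 1$. For a rooted tree $T$ with tree order $\le_T$ and $t\in V(T)$, let $\mathrm{Down}^\circ_T(t)=\{x\in V(T):x<_T t\}$. A weak normal tree of $(S,\mathcal C)$ is a rooted undirected tree $T$ with $V(T)\subseteq S$ such that (1) for every $C\in\mathcal C$ and every two $\le_T$-incomparable $u,v\in C\cap V(T)$ there is $w\in C$ with $w\le_T u$ and $w\le_T v$, and (2) for all $u\le_T v$ in $V(T)$ there is $C\in\mathcal C$ containing $u,v$ with $C\cap\mathrm{Down}^\circ_T(u)=\emptyset$. It is a normal tree if moreover for every rooted ray $R$ of $T$ some necklace contains all but finitely many vertices of $R$. A tree is rayless if it contains no ray. *)

theory Defs
  imports Main
begin

definition connectoid :: "'a set \<Rightarrow> 'a set set \<Rightarrow> bool" where
  "connectoid S F \<longleftrightarrow>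
     (\<forall>X\<in>F. X \<subseteq> S \<and> finite X) \<and>
     (\<forall>X\<in>F. \<forall>Y\<in>F. X \<inter> Y \<noteq> {} \<longrightarrow> X \<union> Y \<in> F) \<and>
     {} \<in> F \<and> (\<forall>s\<in>S. {s} \<in> F)"

definition conn_sets :: "'a set \<Rightarrow> 'a set set \<Rightarrow> 'a set set" where
  "conn_sets S F = {C. C \<subseteq> S \<and> (\<forall>x\<in>C. \<forall>y\<in>C. \<exists>X\<in>F. X \<subseteq> C \<and> x \<in> X \<and> y \<in> X)}"

definition components :: "'a set set \<Rightarrow> 'a set \<Rightarrow> 'a set set" where
  "components CC X = {K. K \<noteq> {} \<and> K \<subseteq> X \<and> K \<in> CC \<and>
       (\<forall>K'. K \<subseteq> K' \<and> K' \<subseteq> X \<and> K' \<in> CC \<longrightarrow> K' = K)}"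

definition finite_adhesion :: "'a set set \<Rightarrow> 'a set \<Rightarrow> 'a set \<Rightarrow> 'a set \<Rightarrow> bool" where
  "finite_adhesion CC S Shat K \<longleftrightarrow>
     (\<exists>X. X \<subseteq> Shat \<and> finite X \<and> K \<in> components CC (S - X))"

definition necklace :: "'a set set \<Rightarrow> 'a set \<Rightarrow> bool" where
  "necklace CC N \<longleftrightarrow> N \<in> CC \<and>
     (\<exists>H :: nat \<Rightarrow> 'a set. N = (\<Union>n. H n) \<and> (\<forall>n. finite (H n) \<and> H n \<in> CC) \<and>
        (\<forall>i j. H i \<inter> H j \<noteq> {} \<longleftrightarrow> (i \<le> j + 1 \<and> j \<le> i + 1)))"

definition ugraph :: "'a set \<Rightarrow> 'a set set \<Rightarrow> bool" where
  "ugraph V E \<longleftrightarrow> (\<forall>e\<in>E. \<exists>x y. x \<noteq> y \<and> x \<in> V \<and> y \<in> V \<and> e = {x, y})"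

definition gpath :: "'a set \<Rightarrow> 'a set set \<Rightarrow> 'a list \<Rightarrow> bool" where
  "gpath V E p \<longleftrightarrow> p \<noteq> [] \<and> distinct p \<and> set p \<subseteq> V \<and>
     (\<forall>i. Suc i < length p \<longrightarrow> {p ! i, p ! Suc i} \<in> E)"

definition gcycle :: "'a set \<Rightarrow> 'a set set \<Rightarrow> 'a list \<Rightarrow> bool" where
  "gcycle V E p \<longleftrightarrow> gpath V E p \<and> length p \<ge> 3 \<and> {last p, hd p} \<in> E"

definition is_tree :: "'a set \<Rightarrow> 'a set set \<Rightarrow> bool" where
  "is_tree V E \<longleftrightarrow> ugraph V E \<and> V \<noteq> {} \<and>
     (\<forall>x\<in>V. \<forall>y\<in>V. \<exists>p. gpath V E p \<and> hd p = x \<and> last p = y) \<and>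
     (\<nexists>p. gcycle V E p)"

definition rooted_tree :: "'a set \<Rightarrow> 'a set set \<Rightarrow> 'a \<Rightarrow> bool" where
  "rooted_tree V E r \<longleftrightarrow> is_tree V E \<and> r \<in> V"

definition tree_le :: "'a set \<Rightarrow> 'a set set \<Rightarrow> 'a \<Rightarrow> 'a \<Rightarrow> 'a \<Rightarrow> bool" where
  "tree_le V E r x y \<longleftrightarrow> (\<exists>p. gpath V E p \<and> hd p = r \<and> last p = y \<and> x \<in> set p)"

definition down_open :: "'a set \<Rightarrow> 'a set set \<Rightarrow> 'a \<Rightarrow> 'a \<Rightarrow> 'a set" where
  "down_open V E r t = {x\<in>V. tree_le V E r x t \<and> x \<noteq> t}"

definition is_ray :: "'a set \<Rightarrow> 'a set set \<Rightarrow> (nat \<Rightarrow> 'a) \<Rightarrow> bool" where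
  "is_ray V E R \<longleftrightarrow> inj R \<and> range R \<subseteq> V \<and> (\<forall>n. {R n, R (Suc n)} \<in> E)"

definition rooted_ray :: "'a set \<Rightarrow> 'a set set \<Rightarrow> 'a \<Rightarrow> (nat \<Rightarrow> 'a) \<Rightarrow> bool" where
  "rooted_ray V E r R \<longleftrightarrow> is_ray V E R \<and> R 0 = r"

definition rayless :: "'a set \<Rightarrow> 'a set set \<Rightarrow> bool" where
  "rayless V E \<longleftrightarrow> (\<nexists>R. is_ray V E R)"

definition weak_normal_tree :: "'a set \<Rightarrow> 'a set set \<Rightarrow> 'a set \<Rightarrow> 'a set set \<Rightarrow> 'a \<Rightarrow> bool" where
  "weak_normal_tree S CC V E r \<longleftrightarrow> rooted_tree V E r \<and> V \<subseteq> S \<and>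
     (\<forall>C\<in>CC. \<forall>u\<in>C \<inter> V. \<forall>v\<in>C \<inter> V.
         \<not> tree_le V E r u v \<and> \<not> tree_le V E r v u \<longrightarrow>
         (\<exists>w\<in>C. tree_le V E r w u \<and> tree_le V E r w v)) \<and>
     (\<forall>u\<in>V. \<forall>v\<in>V. tree_le V E r u v \<longrightarrow>
         (\<exists>C\<in>CC. u \<in> C \<and> v \<in> C \<and> C \<inter> down_open V E r u = {}))"

definition normal_tree :: "'a set \<Rightarrow> 'a set set \<Rightarrow> 'a set \<Rightarrow> 'a set set \<Rightarrow> 'a \<Rightarrow> bool" where
  "normal_tree S CC V E r \<longleftrightarrow> weak_normal_tree S CC V E r \<and>
     (\<forall>R. rooted_ray V E r R \<longrightarrow> (\<exists>N. necklace CC N \<and> finite {n. R n \<notin> N}))"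

end

theory Submission
  imports Defs
begin

text \<open>
  Each nonempty \<open>T\<^sub>K\<close> is glued onto \<open>T\<close> by one new edge from its root to an attachment
  point \<open>t\<^sub>K \<in> V(T)\<close>. To choose \<open>t\<^sub>K\<close>, consider the \<open>T\<close>-minima of the connected sets
  properly containing \<open>K\<close>: any two such sets meet in \<open>K\<close>, so their union is connected
  and the minima are comparable; by finite adhesion each such set meets a fixed finite
  \<open>X \<subseteq> V(T)\<close>, so there are only finitely many minima. Let \<open>t\<^sub>K\<close> be the largest.

  In the glued graph the new edge is the only edge leaving \<open>V(T\<^sub>K)\<close>. Hence paths,
  cycles and rays split at it: the result is a tree, its tree order on \<open>T\<^sub>K\<close> is that
  of \<open>T\<^sub>K\<close> stacked on the down-closure of \<open>t\<^sub>K\<close>, and every ray has a tail in \<open>T\<close>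
  or in some \<open>T\<^sub>K\<close>, which gives the necklace condition and preserves raylessness.
  A connected set \<open>C\<close> either lies inside one \<open>K\<close>, where \<open>T\<^sub>K\<close> is normal, or its
  \<open>T\<close>-minimum lies below every vertex of \<open>C\<close> in the new tree: for \<open>K\<close> met by \<open>C\<close>,
  \<open>K \<union> C\<close> properly contains \<open>K\<close> and has the same \<open>T\<close>-minimum as \<open>C\<close>, which is
  therefore below \<open>t\<^sub>K\<close>.
\<close>

fun walk :: "'a set set \<Rightarrow> 'a list \<Rightarrow> bool" where
  "walk E (x # y # xs) \<longleftrightarrow> {x, y} \<in> E \<and> walk E (y # xs)"
| "walk E _ \<longleftrightarrow> True"

lemma walk_Cons: "walk E (x # xs) \<longleftrightarrow> walk E xs \<and> (xs \<noteq> [] \<longrightarrow> {x, hd xs} \<in> E)"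
  by (cases xs) auto

lemma walk_iff_nth: "walk E p \<longleftrightarrow> (\<forall>i. Suc i < length p \<longrightarrow> {p ! i, p ! Suc i} \<in> E)"
proof (induction p)
  case (Cons x p)
  then show ?case
    by (cases p) (auto simp: walk_Cons nth_Cons split: nat.splits)
qed simp

lemma walk_append:
  "walk E (xs @ ys) \<longleftrightarrow> walk E xs \<and> walk E ys \<and> (xs \<noteq> [] \<and> ys \<noteq> [] \<longrightarrow> {last xs, hd ys} \<in> E)"
  by (induction xs) (auto simp: walk_Cons)

lemma walk_rev: "walk E (rev xs) \<longleftrightarrow> walk E xs"
  by (induction xs) (auto simp: walk_append walk_Cons last_rev insert_commute)

lemma walk_restrict:
  "walk E p \<Longrightarrow> set p \<subseteq> W \<Longrightarrow> (\<And>x y. {x, y} \<in> E \<Longrightarrow> x \<in> W \<Longrightarrow> y \<in> W \<Longrightarrow> {x, y} \<in> E')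
   \<Longrightarrow> walk E' p"
  by (induction E p rule: walk.induct) auto

lemma gpath_iff_walk: "gpath V E p \<longleftrightarrow> p \<noteq> [] \<and> distinct p \<and> set p \<subseteq> V \<and> walk E p"
  unfolding gpath_def walk_iff_nth by auto

lemma gpath_ends_in:
  assumes "gpath V E p" shows "hd p \<in> V" "last p \<in> V"
  using assms hd_in_set last_in_set unfolding gpath_def by blast+

lemma gpath_rev: "gpath V E p \<Longrightarrow> gpath V E (rev p)"
  by (auto simp: gpath_iff_walk walk_rev)

lemma gpath_append:
  "gpath V E xs \<Longrightarrow> gpath V E ys \<Longrightarrow> set xs \<inter> set ys = {} \<Longrightarrow> {last xs, hd ys} \<in> E
   \<Longrightarrow> gpath V E (xs @ ys)"
  by (auto simp: gpath_iff_walk walk_append)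

lemma gpath_appendD:
  assumes "gpath V E (xs @ ys)"
  shows "xs \<noteq> [] \<Longrightarrow> gpath V E xs" and "ys \<noteq> [] \<Longrightarrow> gpath V E ys"
  using assms by (auto simp: gpath_iff_walk walk_append)

lemma gpath_mono: "gpath V E p \<Longrightarrow> V \<subseteq> V' \<Longrightarrow> E \<subseteq> E' \<Longrightarrow> gpath V' E' p"
  by (auto simp: gpath_iff_walk intro: walk_restrict)

lemma gpath_restrict:
  "gpath V E p \<Longrightarrow> set p \<subseteq> W \<Longrightarrow> (\<And>x y. {x, y} \<in> E \<Longrightarrow> x \<in> W \<Longrightarrow> y \<in> W \<Longrightarrow> {x, y} \<in> E')
   \<Longrightarrow> gpath W E' p"
  by (auto simp: gpath_iff_walk intro: walk_restrict)

lemma gpath_hd_last_eq: "gpath V E p \<Longrightarrow> hd p = last p \<Longrightarrow> p = [hd p]"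
  by (cases p) (auto simp: gpath_def split: if_splits)

lemma walk_shortcut_to_gpath:
  assumes "walk E p" "p \<noteq> []" "set p \<subseteq> V"
  shows "\<exists>q. gpath V E q \<and> hd q = hd p \<and> last q = last p"
  using assms
proof (induction "length p" arbitrary: p rule: less_induct)
  case less
  show ?case
  proof (cases "distinct p")
    case True
    then show ?thesis using less.prems by (auto simp: gpath_iff_walk)
  next
    case False
    then obtain xs y ys zs where p: "p = xs @ y # ys @ y # zs"
      using not_distinct_decomp[of p] by auto
    let ?p' = "xs @ y # zs"
    have "walk E (xs @ [y])" "walk E (y # zs)"
      using less.prems(1) unfolding p by (simp_all add: walk_append walk_Cons)
    then have "walk E ?p'"
      by (auto simp: walk_append walk_Cons)
    moreover have "hd ?p' = hd p" "last ?p' = last p"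
      unfolding p by (cases xs; simp)+
    moreover have "length ?p' < length p" "set ?p' \<subseteq> V"
      using less.prems(3) unfolding p by auto
    ultimately show ?thesis
      using less.hyps[of ?p'] by fastforce
  qed
qed

lemma paths_from_root_connect:
  assumes reach: "\<And>x. x \<in> V \<Longrightarrow> \<exists>p. gpath V E p \<and> hd p = r \<and> last p = x"
    and x: "x \<in> V" and y: "y \<in> V"
  shows "\<exists>p. gpath V E p \<and> hd p = x \<and> last p = y"
proof -
  obtain px py where px: "gpath V E px" "hd px = r" "last px = x"
    and py: "gpath V E py" "hd py = r" "last py = y"
    using reach x y by metis
  obtain q where py_q: "py = r # q"
    using py by (cases py) (auto simp: gpath_def)
  let ?w = "rev px @ q"
  have "walk E (rev px)" "walk E q" "q \<noteq> [] \<longrightarrow> {r, hd q} \<in> E"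
    using px py unfolding py_q by (auto simp: gpath_iff_walk walk_rev walk_Cons)
  then have "walk E ?w"
    using px(1,2) by (auto simp: walk_append last_rev gpath_def)
  moreover have "?w \<noteq> []" "set ?w \<subseteq> V"
    using px(1) py(1) unfolding py_q by (auto simp: gpath_def)
  moreover have "hd ?w = x" "last ?w = y"
    using px py unfolding py_q by (auto simp: hd_rev last_rev gpath_def)
  ultimately show ?thesis
    using walk_shortcut_to_gpath by metis
qed

lemma is_ray_shift:
  assumes R: "is_ray V E R"
  shows "is_ray V E (\<lambda>i. R (j + i))"
  unfolding is_ray_def
proof (intro conjI allI)
  show "inj (\<lambda>i. R (j + i))"
    using R unfolding is_ray_def by (auto intro!: injI dest: injD)
  show "range (\<lambda>i. R (j + i)) \<subseteq> V"
    using R unfolding is_ray_def by auto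
  fix n
  show "{R (j + n), R (j + Suc n)} \<in> E"
    using R unfolding is_ray_def by (simp only: add_Suc_right)
qed

lemma is_ray_restrict:
  assumes "is_ray V E R" "range R \<subseteq> W"
    and "\<And>x y. {x, y} \<in> E \<Longrightarrow> x \<in> W \<Longrightarrow> y \<in> W \<Longrightarrow> {x, y} \<in> E'"
  shows "is_ray W E' R"
proof -
  have R: "inj R" "\<And>n. {R n, R (Suc n)} \<in> E"
    using assms(1) unfolding is_ray_def by auto
  have "{R n, R (Suc n)} \<in> E'" for n
    using assms(3)[OF R(2)] assms(2) by auto
  then show ?thesis
    using R(1) assms(2) unfolding is_ray_def by simp
qed

lemma ray_edge_before:
  assumes "is_ray V E R" "j \<noteq> 0"
  shows "{R (j - 1), R j} \<in> E" "{R j, R (j - 1)} \<in> E"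
proof -
  have "Suc (j - 1) = j"
    using assms(2) by simp
  then show "{R (j - 1), R j} \<in> E"
    using assms(1) unfolding is_ray_def by metis
  then show "{R j, R (j - 1)} \<in> E"
    by (simp only: insert_commute)
qed

lemma ray_prefix_gpath:
  assumes "is_ray V E R"
  shows "gpath V E (map R [0..<Suc m])" "hd (map R [0..<Suc m]) = R 0"
    "last (map R [0..<Suc m]) = R m" "set (map R [0..<Suc m]) = R ` {..m}"
proof -
  have "distinct (map R [0..<Suc m])"
    using assms unfolding is_ray_def distinct_map by (metis distinct_upt inj_on_subset subset_UNIV)
  moreover have "walk E (map R [0..<Suc m])"
    using assms unfolding is_ray_def walk_iff_nth by (auto simp del: upt_Suc)
  ultimately show "gpath V E (map R [0..<Suc m])"
    using assms unfolding is_ray_def gpath_iff_walk by (auto simp del: upt_Suc)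
  show "hd (map R [0..<Suc m]) = R 0" "last (map R [0..<Suc m]) = R m"
    by (simp_all add: hd_map last_map del: upt_Suc)
  show "set (map R [0..<Suc m]) = R ` {..m}"
    by (auto simp del: upt_Suc)
qed

lemma gcycle_of_two_paths:
  assumes p: "gpath V E (x # P @ [z])" and q: "gpath V E (x # Q @ [z])"
    and disj: "set P \<inter> set Q = {}" and nontrivial: "P \<noteq> [] \<or> Q \<noteq> []"
  shows "gcycle V E (x # P @ z # rev Q)"
proof -
  let ?c = "x # P @ z # rev Q"
  have "walk E (rev (x # Q @ [z]))"
    using q by (simp only: walk_rev gpath_iff_walk)
  then have "walk E ((z # rev Q) @ [x])"
    by simp
  then have "walk E (z # rev Q)"
    by (simp only: walk_append)
  moreover have "walk E (x # P @ [z])"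
    using p by (simp add: gpath_iff_walk)
  ultimately have "walk E ?c"
    using walk_append[of E "x # P @ [z]" "rev Q"] by (simp add: walk_Cons)
  moreover have "distinct ?c" "set ?c \<subseteq> V"
    using p q disj by (auto simp: gpath_def)
  moreover have "{last ?c, hd ?c} \<in> E"
    using q by (cases Q) (auto simp: gpath_iff_walk walk_Cons insert_commute)
  moreover have "length ?c \<ge> 3"
    using nontrivial by (cases P; cases Q) auto
  ultimately show ?thesis
    by (simp add: gcycle_def gpath_iff_walk)
qed

lemma gcycle_of_diverging_paths:
  assumes p: "gpath V E (x # p)" and q: "gpath V E (x # q)"
    and nonempty: "p \<noteq> []" "q \<noteq> []" and ends: "last p = last q" and diverge: "hd p \<noteq> hd q"
  shows "\<exists>c. gcycle V E c"
proof -
  have "last p \<in> set p" "last p \<in> set q"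
    using last_in_set[OF nonempty(1)] last_in_set[OF nonempty(2)] ends by simp_all
  then obtain P1 z P2 where p_split: "p = P1 @ z # P2" "z \<in> set q" "\<forall>y\<in>set P1. y \<notin> set q"
    using split_list_first_prop[of p "\<lambda>z. z \<in> set q"] by blast
  obtain Q1 Q2 where q_split: "q = Q1 @ z # Q2"
    using split_list[OF p_split(2)] by blast
  have "gpath V E ((x # P1 @ [z]) @ P2)" "gpath V E ((x # Q1 @ [z]) @ Q2)"
    using p q unfolding p_split(1) q_split by simp_all
  then have "gpath V E (x # P1 @ [z])" "gpath V E (x # Q1 @ [z])"
    using gpath_appendD(1) by blast+
  moreover have "set P1 \<inter> set Q1 = {}" "P1 \<noteq> [] \<or> Q1 \<noteq> []"
    using p_split q_split diverge by auto
  ultimately have "gcycle V E (x # P1 @ z # rev Q1)"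
    by (rule gcycle_of_two_paths)
  then show ?thesis
    by blast
qed

lemma acyclic_unique_gpath:
  assumes acyclic: "\<nexists>c. gcycle V E c"
    and "gpath V E p" "gpath V E q" "hd p = hd q" "last p = last q"
  shows "p = q"
  using assms(2-)
proof (induction p arbitrary: q)
  case Nil
  then show ?case by (simp add: gpath_def)
next
  case (Cons x p')
  obtain q' where q: "q = x # q'"
    using Cons.prems(2,3) by (cases q) (auto simp: gpath_def)
  consider "p' = []" | "q' = []" | "p' \<noteq> []" "q' \<noteq> []"
    by blast
  then show ?case
  proof cases
    case 1
    then have "q = [hd q]"
      using Cons.prems gpath_hd_last_eq[of V E q] by simp
    then show ?thesis
      using 1 q by simp
  next
    case 2
    then have "x # p' = [hd (x # p')]"
      using Cons.prems gpath_hd_last_eq[of V E "x # p'"] unfolding q by simp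
    then show ?thesis
      using 2 q by simp
  next
    case 3
    have "gpath V E ([x] @ p')" "gpath V E ([x] @ q')"
      using Cons.prems(1,2) unfolding q by simp_all
    then have p': "gpath V E p'" and q': "gpath V E q'"
      using 3 gpath_appendD(2) by blast+
    have last': "last p' = last q'"
      using Cons.prems(4) 3 unfolding q by simp
    show ?thesis
    proof (cases "hd p' = hd q'")
      case True
      then show ?thesis
        using Cons.IH[OF p' q' True last'] q by simp
    next
      case False
      then show ?thesis
        using gcycle_of_diverging_paths[OF Cons.prems(1) _ 3 last'] Cons.prems(2) acyclic
        unfolding q by blast
    qed
  qed
qed

lemma gcycle_rev:
  assumes "gcycle V E c"
  shows "gcycle V E (rev c)"
proof -
  have c: "gpath V E c" "length c \<ge> 3" "{last c, hd c} \<in> E"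
    using assms unfolding gcycle_def by blast+
  then have "c \<noteq> []"
    by auto
  then have "{last (rev c), hd (rev c)} = {last c, hd c}"
    by (auto simp: hd_rev last_rev)
  then show ?thesis
    unfolding gcycle_def using gpath_rev[OF c(1)] c(2,3) by simp
qed

definition rootpath :: "'a set \<Rightarrow> 'a set set \<Rightarrow> 'a \<Rightarrow> 'a \<Rightarrow> 'a list" where
  "rootpath V E r y = (THE p. gpath V E p \<and> hd p = r \<and> last p = y)"

definition depth :: "'a set \<Rightarrow> 'a set set \<Rightarrow> 'a \<Rightarrow> 'a \<Rightarrow> nat" where
  "depth V E r y = length (rootpath V E r y)"

context
  fixes V :: "'a set" and E :: "'a set set" and r :: 'a
  assumes tree: "is_tree V E" and root: "r \<in> V"
begin

lemma tree_unique_gpath: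
  "gpath V E p \<Longrightarrow> gpath V E q \<Longrightarrow> hd p = hd q \<Longrightarrow> last p = last q \<Longrightarrow> p = q"
  using acyclic_unique_gpath tree unfolding is_tree_def by blast

lemma rootpath:
  assumes "y \<in> V"
  shows "gpath V E (rootpath V E r y)" "hd (rootpath V E r y) = r" "last (rootpath V E r y) = y"
proof -
  obtain p where p: "gpath V E p" "hd p = r" "last p = y"
    using tree root assms unfolding is_tree_def by blast
  have "\<exists>!p. gpath V E p \<and> hd p = r \<and> last p = y"
  proof (rule ex1I[of _ p])
    fix q
    assume "gpath V E q \<and> hd q = r \<and> last q = y"
    then show "q = p"
      using tree_unique_gpath[of q p] p by simp
  qed (use p in simp)
  then have "gpath V E (rootpath V E r y) \<and> hd (rootpath V E r y) = r \<and> last (rootpath V E r y) = y"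
    unfolding rootpath_def by (rule theI')
  then show "gpath V E (rootpath V E r y)" "hd (rootpath V E r y) = r" "last (rootpath V E r y) = y"
    by auto
qed

lemma rootpath_unique:
  assumes "gpath V E p" "hd p = r"
  shows "rootpath V E r (last p) = p"
  using tree_unique_gpath[OF rootpath(1) assms(1)] rootpath(2,3) gpath_ends_in(2) assms by metis

lemma tree_le_iff_rootpath: "tree_le V E r x y \<longleftrightarrow> y \<in> V \<and> x \<in> set (rootpath V E r y)"
proof
  assume "tree_le V E r x y"
  then obtain p where p: "gpath V E p" "hd p = r" "last p = y" "x \<in> set p"
    unfolding tree_le_def by blast
  then show "y \<in> V \<and> x \<in> set (rootpath V E r y)"
    using rootpath_unique[OF p(1,2)] gpath_ends_in(2)[OF p(1)] by simp
next
  assume "y \<in> V \<and> x \<in> set (rootpath V E r y)"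
  then show "tree_le V E r x y"
    unfolding tree_le_def using rootpath by blast
qed

lemma rootpath_prefix:
  assumes "y \<in> V" "rootpath V E r y = A @ x # B"
  shows "rootpath V E r x = A @ [x]"
proof -
  have "gpath V E (A @ [x])" "hd (A @ [x]) = r"
    using rootpath[OF assms(1)] gpath_appendD(1)[of V E "A @ [x]" B] assms(2)
    by (auto simp: hd_append split: if_splits)
  then show ?thesis
    using rootpath_unique by fastforce
qed

lemma tree_le_refl: "x \<in> V \<Longrightarrow> tree_le V E r x x"
  unfolding tree_le_def using rootpath last_in_set gpath_def by metis

lemma tree_le_trans:
  assumes "tree_le V E r x y" "tree_le V E r y z"
  shows "tree_le V E r x z"
proof -
  obtain A B where z: "z \<in> V" "rootpath V E r z = A @ y # B"
    using assms(2) split_list unfolding tree_le_iff_rootpath by metis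
  then have "x \<in> set (A @ [y])"
    using assms(1) rootpath_prefix unfolding tree_le_iff_rootpath by metis
  then show ?thesis
    using z unfolding tree_le_iff_rootpath by auto
qed

lemma tree_le_depth:
  assumes "tree_le V E r x y"
  shows "depth V E r x \<le> depth V E r y" "depth V E r x = depth V E r y \<Longrightarrow> x = y"
proof -
  obtain A B where y: "y \<in> V" "rootpath V E r y = A @ x # B"
    using assms split_list unfolding tree_le_iff_rootpath by metis
  then have x: "rootpath V E r x = A @ [x]"
    by (rule rootpath_prefix)
  show "depth V E r x \<le> depth V E r y"
    unfolding depth_def x y by simp
  assume "depth V E r x = depth V E r y"
  then show "x = y"
    using rootpath(3)[OF y(1)] unfolding depth_def x y(2) by simp
qed

lemma tree_le_antisym: "tree_le V E r x y \<Longrightarrow> tree_le V E r y x \<Longrightarrow> x = y"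
  using tree_le_depth by (meson le_antisym)

lemma finite_tree_le_below: "finite {x. tree_le V E r x y}"
  by (rule finite_subset[of _ "set (rootpath V E r y)"]) (auto simp: tree_le_iff_rootpath)

lemma finite_chain_has_greatest:
  assumes "finite A" "A \<noteq> {}" "A \<subseteq> V"
    and chain: "\<And>a b. a \<in> A \<Longrightarrow> b \<in> A \<Longrightarrow> tree_le V E r a b \<or> tree_le V E r b a"
  shows "\<exists>t\<in>A. \<forall>a\<in>A. tree_le V E r a t"
  using assms
proof (induction A rule: finite_ne_induct)
  case (singleton x)
  then show ?case using tree_le_refl by simp
next
  case (insert x A)
  then obtain t where t: "t \<in> A" "\<forall>a\<in>A. tree_le V E r a t"
    by auto
  show ?case
  proof (cases "tree_le V E r x t")
    case True
    then show ?thesis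
      using t by blast
  next
    case False
    then have "tree_le V E r t x"
      using insert.prems(2) t(1) by blast
    then show ?thesis
      using t tree_le_trans tree_le_refl insert.prems(1) by blast
  qed
qed

end

lemma tree_edgeD: "is_tree V E \<Longrightarrow> e \<in> E \<Longrightarrow> \<exists>x y. x \<noteq> y \<and> x \<in> V \<and> y \<in> V \<and> e = {x, y}"
  unfolding is_tree_def ugraph_def by blast

lemma tree_le_in_V: "tree_le V E r x y \<Longrightarrow> x \<in> V \<and> y \<in> V"
  unfolding tree_le_def gpath_def by (auto intro: last_in_set)

section \<open>Edges through which a path must leave a vertex set\<close>

definition gate_edge :: "'a set set \<Rightarrow> 'a set \<Rightarrow> 'a \<Rightarrow> 'a \<Rightarrow> bool" where
  "gate_edge E W g h \<longleftrightarrow> (\<forall>x y. {x, y} \<in> E \<longrightarrow> x \<in> W \<longrightarrow> y \<notin> W \<longrightarrow> x = g \<and> y = h)"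

lemma gate_edgeD: "gate_edge E W g h \<Longrightarrow> {x, y} \<in> E \<Longrightarrow> x \<in> W \<Longrightarrow> y \<notin> W \<Longrightarrow> x = g \<and> y = h"
  unfolding gate_edge_def by blast

lemma gate_edge_Compl: "gate_edge E W g h \<Longrightarrow> gate_edge E (- W) h g"
  unfolding gate_edge_def by (metis Compl_iff insert_commute)

lemma walk_first_entry:
  assumes "gate_edge E W g h" "walk E p" "p \<noteq> []" "hd p \<notin> W" "last p \<in> W"
  shows "\<exists>A B. p = A @ B \<and> A \<noteq> [] \<and> B \<noteq> [] \<and> set A \<inter> W = {} \<and> last A = h \<and> hd B = g \<and> g \<in> W"
proof -
  define A where "A = takeWhile (\<lambda>x. x \<notin> W) p"
  define B where "B = dropWhile (\<lambda>x. x \<notin> W) p"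
  have p: "p = A @ B"
    unfolding A_def B_def by simp
  have "A \<noteq> []"
    using assms(3,4) unfolding A_def by (cases p) auto
  moreover have "B \<noteq> []"
    using assms(3,5) last_in_set unfolding B_def dropWhile_eq_Nil_conv by blast
  moreover have "set A \<inter> W = {}"
    unfolding A_def by (auto dest: set_takeWhileD)
  moreover have "hd B \<in> W"
    using \<open>B \<noteq> []\<close> hd_dropWhile unfolding B_def by blast
  moreover have "{hd B, last A} \<in> E"
    using assms(2) \<open>A \<noteq> []\<close> \<open>B \<noteq> []\<close> unfolding p by (simp add: walk_append insert_commute)
  ultimately show ?thesis
    using gate_edgeD[OF assms(1)] last_in_set p by blast
qed

lemma gpath_stays_inside:
  assumes "gate_edge E W g h" "gpath V E p" "hd p \<in> W" "last p \<in> W"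
  shows "set p \<subseteq> W"
  using assms(2-)
proof (induction p)
  case (Cons x q)
  consider "q = []" | "q \<noteq> []" "hd q \<in> W" | "q \<noteq> []" "hd q \<notin> W"
    by blast
  then show ?case
  proof cases
    case 1
    then show ?thesis using Cons.prems(2) by simp
  next
    case 2
    then have "gpath V E q"
      using Cons.prems(1) gpath_appendD(2)[of V E "[x]" q] by simp
    then show ?thesis
      using Cons.IH Cons.prems(2,3) 2 by simp
  next
    case 3
    have q: "walk E q" "{x, hd q} \<in> E" "x \<notin> set q"
      using Cons.prems(1) 3 by (auto simp: gpath_iff_walk walk_Cons)
    obtain A B where "q = A @ B" "B \<noteq> []" "hd B = g"
      using walk_first_entry[OF assms(1) q(1) 3] Cons.prems(3) 3(1) by auto
    then have "g \<in> set q"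
      by auto
    moreover have "x = g"
      using gate_edgeD[OF assms(1) q(2)] Cons.prems(2) 3(2) by simp
    ultimately show ?thesis
      using q(3) by simp
  qed
qed (simp add: gpath_def)

lemma gpath_stays_outside:
  assumes "gate_edge E W g h" "gpath V E p" "hd p \<notin> W" "last p \<notin> W"
  shows "set p \<inter> W = {}"
  using gpath_stays_inside[OF gate_edge_Compl[OF assms(1)] assms(2)] assms(3,4) by auto

lemma gpath_crosses_gate:
  assumes "gate_edge E W g h" "gpath V E p" "hd p \<notin> W" "last p \<in> W"
  obtains A B where "p = A @ B" "A \<noteq> []" "B \<noteq> []" "set A \<inter> W = {}" "set B \<subseteq> W"
    "last A = h" "hd B = g"
proof -
  obtain A B where AB: "p = A @ B" "A \<noteq> []" "B \<noteq> []" "set A \<inter> W = {}" "last A = h" "hd B = g"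
      "g \<in> W"
    using walk_first_entry[OF assms(1), of p] assms(2-) by (auto simp: gpath_iff_walk)
  moreover have "gpath V E B"
    using gpath_appendD(2) assms(2) AB(1,3) by blast
  ultimately have "set B \<subseteq> W"
    using gpath_stays_inside[OF assms(1)] assms(4) by auto
  with AB show ?thesis
    using that by blast
qed

lemma conn_sets_subset: "C \<in> conn_sets S F \<Longrightarrow> C \<subseteq> S"
  unfolding conn_sets_def by blast

lemma conn_setsD: "C \<in> conn_sets S F \<Longrightarrow> x \<in> C \<Longrightarrow> y \<in> C \<Longrightarrow> \<exists>X\<in>F. X \<subseteq> C \<and> x \<in> X \<and> y \<in> X"
  unfolding conn_sets_def by blast

lemma connectoid_Un: "connectoid S F \<Longrightarrow> X \<in> F \<Longrightarrow> Y \<in> F \<Longrightarrow> X \<inter> Y \<noteq> {} \<Longrightarrow> X \<union> Y \<in> F"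
  unfolding connectoid_def by blast

lemma conn_sets_Un:
  assumes conn: "connectoid S F" and A: "A \<in> conn_sets S F" and B: "B \<in> conn_sets S F"
    and meet: "A \<inter> B \<noteq> {}"
  shows "A \<union> B \<in> conn_sets S F"
proof -
  obtain c where c: "c \<in> A" "c \<in> B"
    using meet by blast
  have link: "\<exists>X\<in>F. X \<subseteq> A \<union> B \<and> x \<in> X \<and> c \<in> X" if x: "x \<in> A \<union> B" for x
  proof -
    obtain X where "X \<in> F" "X \<subseteq> A \<or> X \<subseteq> B" "x \<in> X" "c \<in> X"
      using conn_setsD[OF A _ c(1), of x] conn_setsD[OF B _ c(2), of x] x by blast
    then show ?thesis
      by blast
  qed
  have "\<exists>X\<in>F. X \<subseteq> A \<union> B \<and> x \<in> X \<and> y \<in> X" if xy: "x \<in> A \<union> B" "y \<in> A \<union> B" for x y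
  proof -
    obtain X where X: "X \<in> F" "X \<subseteq> A \<union> B" "x \<in> X" "c \<in> X"
      using link[OF xy(1)] by blast
    obtain Y where Y: "Y \<in> F" "Y \<subseteq> A \<union> B" "y \<in> Y" "c \<in> Y"
      using link[OF xy(2)] by blast
    have "X \<union> Y \<in> F"
      using connectoid_Un[OF conn X(1) Y(1)] X(4) Y(4) by blast
    then show ?thesis
      using X Y by (intro bexI[of _ "X \<union> Y"]) auto
  qed
  moreover have "A \<union> B \<subseteq> S"
    using A B conn_sets_subset by blast
  ultimately show ?thesis
    unfolding conn_sets_def by blast
qed

lemma componentsD:
  assumes "K \<in> components CC A"
  shows "K \<noteq> {}" "K \<subseteq> A" "K \<in> CC"
  using assms unfolding components_def by blast+

lemma component_maximal:
  "K \<in> components CC A \<Longrightarrow> K \<subseteq> K' \<Longrightarrow> K' \<subseteq> A \<Longrightarrow> K' \<in> CC \<Longrightarrow> K' = K"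
  unfolding components_def by blast

lemma component_absorbs:
  assumes conn: "connectoid S F" and K: "K \<in> components (conn_sets S F) A"
    and C: "C \<in> conn_sets S F" "C \<inter> K \<noteq> {}" "C \<subseteq> A"
  shows "C \<subseteq> K"
proof -
  have "K \<union> C \<in> conn_sets S F"
    using conn_sets_Un[OF conn componentsD(3)[OF K] C(1)] C(2) by blast
  then have "K \<union> C = K"
    using component_maximal[OF K] componentsD(2)[OF K] C(3) by blast
  then show ?thesis
    by blast
qed

lemma components_disjoint:
  assumes conn: "connectoid S F" and K: "K \<in> components (conn_sets S F) A"
    and K': "K' \<in> components (conn_sets S F) A" and meet: "K \<inter> K' \<noteq> {}"
  shows "K = K'"
proof -
  have "K' \<subseteq> K" "K \<subseteq> K'"
    using component_absorbs[OF conn K componentsD(3)[OF K']] component_absorbs[OF conn K' componentsD(3)[OF K]]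
      componentsD(2)[OF K] componentsD(2)[OF K'] meet by blast+
  then show ?thesis
    by blast
qed

lemma component_proper_superset_meets:
  assumes K: "K \<in> components (conn_sets S F) (S - Y)" and C: "C \<in> conn_sets S F" "K \<subset> C"
  shows "C \<inter> Y \<noteq> {}"
proof
  assume "C \<inter> Y = {}"
  then have "C \<subseteq> S - Y"
    using conn_sets_subset[OF C(1)] by blast
  then show False
    using component_maximal[OF K] C by blast
qed

section \<open>Minima of connected sets and attachment points\<close>

definition tree_min :: "'a set \<Rightarrow> 'a set set \<Rightarrow> 'a \<Rightarrow> 'a set \<Rightarrow> 'a" where
  "tree_min V E r A = (THE m. m \<in> A \<and> (\<forall>y\<in>A. tree_le V E r m y))"

lemma tree_min_eqI:
  assumes "is_tree V E" "r \<in> V" "m \<in> A" "\<forall>y\<in>A. tree_le V E r m y"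
  shows "tree_min V E r A = m"
  unfolding tree_min_def
proof (rule the_equality)
  fix m'
  assume "m' \<in> A \<and> (\<forall>y\<in>A. tree_le V E r m' y)"
  then show "m' = m"
    using tree_le_antisym[OF assms(1,2), of m m'] assms(3,4) by simp
qed (use assms(3,4) in simp)

lemma weak_normal_tree_rooted:
  assumes "weak_normal_tree S CC V E r"
  shows "is_tree V E" "r \<in> V" "V \<subseteq> S"
  using assms unfolding weak_normal_tree_def rooted_tree_def by auto

lemma weak_normal_tree_common_lower_bound:
  assumes "weak_normal_tree S CC V E r" "C \<in> CC" "u \<in> C \<inter> V" "v \<in> C \<inter> V"
    "\<not> tree_le V E r u v" "\<not> tree_le V E r v u"
  shows "\<exists>w\<in>C. tree_le V E r w u \<and> tree_le V E r w v"
  using assms unfolding weak_normal_tree_def by blast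

lemma weak_normal_tree_separating_set:
  assumes "weak_normal_tree S CC V E r" "tree_le V E r u v"
  shows "\<exists>C\<in>CC. u \<in> C \<and> v \<in> C \<and> C \<inter> down_open V E r u = {}"
  using assms tree_le_in_V[OF assms(2)] unfolding weak_normal_tree_def by blast

lemma weak_normal_tree_min:
  assumes T: "weak_normal_tree S CC V E r" and C: "C \<in> CC" "C \<inter> V \<noteq> {}"
  shows "tree_min V E r (C \<inter> V) \<in> C \<inter> V"
    and "\<forall>y\<in>C \<inter> V. tree_le V E r (tree_min V E r (C \<inter> V)) y"
proof -
  note tree = weak_normal_tree_rooted(1,2)[OF T]
  obtain m where m: "m \<in> C \<inter> V" and least: "\<And>y. y \<in> C \<inter> V \<Longrightarrow> depth V E r m \<le> depth V E r y"
    using C(2) ex_has_least_nat[of "\<lambda>y. y \<in> C \<inter> V" _ "depth V E r"] by blast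
  have below: "x = m" if "x \<in> C \<inter> V" "tree_le V E r x m" for x
    using least[OF that(1)] tree_le_depth[OF tree that(2)] by simp
  have m_least: "tree_le V E r m y" if y: "y \<in> C \<inter> V" for y
  proof (rule ccontr)
    assume not_le: "\<not> tree_le V E r m y"
    have "\<not> tree_le V E r y m"
      using below[OF y] not_le tree_le_refl[OF tree] y by blast
    then obtain w where w: "w \<in> C" "tree_le V E r w m" "tree_le V E r w y"
      using weak_normal_tree_common_lower_bound[OF T C(1) m y not_le] by blast
    then have "w = m"
      using below[OF _ w(2)] tree_le_in_V[OF w(2)] by simp
    then show False
      using w(3) not_le by simp
  qed
  then have "tree_min V E r (C \<inter> V) = m"
    using tree_min_eqI[OF tree m] by blast
  then show "tree_min V E r (C \<inter> V) \<in> C \<inter> V" "\<forall>y\<in>C \<inter> V. tree_le V E r (tree_min V E r (C \<inter> V)) y"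
    using m m_least by auto
qed

lemma tree_min_comparable:
  assumes T: "weak_normal_tree S CC V E r"
    and C: "C \<in> CC" "C' \<in> CC" "C \<union> C' \<in> CC" "C \<inter> V \<noteq> {}" "C' \<inter> V \<noteq> {}"
  defines "m \<equiv> tree_min V E r (C \<inter> V)" and "m' \<equiv> tree_min V E r (C' \<inter> V)"
  shows "tree_le V E r m m' \<or> tree_le V E r m' m"
proof (rule ccontr)
  note tree = weak_normal_tree_rooted(1,2)[OF T]
  note min = weak_normal_tree_min[OF T C(1,4)] weak_normal_tree_min[OF T C(2,5)]
  assume incomparable: "\<not> (tree_le V E r m m' \<or> tree_le V E r m' m)"
  then obtain w where w: "w \<in> C \<union> C'" "tree_le V E r w m" "tree_le V E r w m'"
    using weak_normal_tree_common_lower_bound[OF T C(3), of m m'] min unfolding m_def m'_def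
    by blast
  have "w \<in> V"
    using tree_le_in_V[OF w(2)] by simp
  then have "w = m \<or> w = m'"
    using w min tree_le_antisym[OF tree] unfolding m_def m'_def by blast
  then show False
    using w incomparable by blast
qed

definition attachment_point :: "'a set set \<Rightarrow> 'a set \<Rightarrow> 'a set set \<Rightarrow> 'a \<Rightarrow> 'a set \<Rightarrow> 'a \<Rightarrow> bool" where
  "attachment_point CC V E r K t \<longleftrightarrow> t \<in> V \<and>
     (\<exists>C\<in>CC. K \<subset> C \<and> tree_min V E r (C \<inter> V) = t) \<and>
     (\<forall>C\<in>CC. K \<subset> C \<longrightarrow> tree_le V E r (tree_min V E r (C \<inter> V)) t)"

lemma finite_minima_of_supersets:
  assumes T: "weak_normal_tree S (conn_sets S F) V E r"
    and K: "K \<in> components (conn_sets S F) (S - V)"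
    and adhesion: "finite_adhesion (conn_sets S F) S V K"
  shows "finite ((\<lambda>C. tree_min V E r (C \<inter> V)) ` {C \<in> conn_sets S F. K \<subset> C})"
proof -
  note tree = weak_normal_tree_rooted[OF T]
  obtain Y where Y: "Y \<subseteq> V" "finite Y" "K \<in> components (conn_sets S F) (S - Y)"
    using adhesion unfolding finite_adhesion_def by blast
  have "(\<lambda>C. tree_min V E r (C \<inter> V)) ` {C \<in> conn_sets S F. K \<subset> C} \<subseteq> (\<Union>y\<in>Y. {x. tree_le V E r x y})"
  proof
    fix m
    assume "m \<in> (\<lambda>C. tree_min V E r (C \<inter> V)) ` {C \<in> conn_sets S F. K \<subset> C}"
    then obtain C where C: "C \<in> conn_sets S F" "K \<subset> C" "m = tree_min V E r (C \<inter> V)"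
      by blast
    obtain y where "y \<in> C" "y \<in> Y"
      using component_proper_superset_meets[OF Y(3) C(1,2)] by blast
    moreover have "C \<inter> V \<noteq> {}"
      using component_proper_superset_meets[OF K C(1,2)] .
    ultimately show "m \<in> (\<Union>y\<in>Y. {x. tree_le V E r x y})"
      using weak_normal_tree_min(2)[OF T C(1)] C(3) Y(1) by blast
  qed
  moreover have "finite (\<Union>y\<in>Y. {x. tree_le V E r x y})"
    using Y(2) finite_tree_le_below[OF tree(1,2)] by blast
  ultimately show ?thesis
    by (rule finite_subset)
qed

lemma attachment_point_exists:
  assumes conn: "connectoid S F" and S_conn: "S \<in> conn_sets S F"
    and T: "weak_normal_tree S (conn_sets S F) V E r"
    and K: "K \<in> components (conn_sets S F) (S - V)"
    and adhesion: "finite_adhesion (conn_sets S F) S V K"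
  shows "\<exists>t. attachment_point (conn_sets S F) V E r K t"
proof -
  note tree = weak_normal_tree_rooted[OF T]
  define M where "M = (\<lambda>C. tree_min V E r (C \<inter> V)) ` {C \<in> conn_sets S F. K \<subset> C}"
  have meets_V: "C \<inter> V \<noteq> {}" if "C \<in> conn_sets S F" "K \<subset> C" for C
    using component_proper_superset_meets[OF K that] .
  have "finite M"
    unfolding M_def using finite_minima_of_supersets[OF T K adhesion] .
  moreover have "K \<subset> S"
    using K tree(2,3) unfolding components_def by blast
  then have "M \<noteq> {}"
    using S_conn unfolding M_def by blast
  moreover have "M \<subseteq> V"
  proof
    fix m
    assume "m \<in> M"
    then obtain C where C: "C \<in> conn_sets S F" "K \<subset> C" "m = tree_min V E r (C \<inter> V)"
      unfolding M_def by blast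
    then show "m \<in> V"
      using weak_normal_tree_min(1)[OF T C(1) meets_V[OF C(1,2)]] by simp
  qed
  moreover have "tree_le V E r a b \<or> tree_le V E r b a" if ab: "a \<in> M" "b \<in> M" for a b
  proof -
    obtain C C' where C: "C \<in> conn_sets S F" "K \<subset> C" "a = tree_min V E r (C \<inter> V)"
      and C': "C' \<in> conn_sets S F" "K \<subset> C'" "b = tree_min V E r (C' \<inter> V)"
      using ab unfolding M_def by blast
    have "C \<inter> C' \<noteq> {}"
      using componentsD(1)[OF K] C(2) C'(2) by blast
    then have "C \<union> C' \<in> conn_sets S F"
      by (rule conn_sets_Un[OF conn C(1) C'(1)])
    then show ?thesis
      using tree_min_comparable[OF T C(1) C'(1) _ meets_V[OF C(1,2)] meets_V[OF C'(1,2)]] C(3) C'(3)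
      by simp
  qed
  ultimately have "\<exists>t\<in>M. \<forall>m\<in>M. tree_le V E r m t"
    by (rule finite_chain_has_greatest[OF tree(1,2)])
  then obtain t where t: "t \<in> M" "\<forall>m\<in>M. tree_le V E r m t"
    by blast
  then obtain C where "C \<in> conn_sets S F" "K \<subset> C" "t = tree_min V E r (C \<inter> V)"
    unfolding M_def by blast
  moreover have "\<forall>C\<in>conn_sets S F. K \<subset> C \<longrightarrow> tree_le V E r (tree_min V E r (C \<inter> V)) t"
    using t(2) unfolding M_def by blast
  moreover have "t \<in> V"
    using \<open>M \<subseteq> V\<close> t(1) by blast
  ultimately show ?thesis
    unfolding attachment_point_def by blast
qed

section \<open>Gluing rooted trees onto a rooted tree\<close>

locale tree_gluing =
  fixes V :: "'a set" and E :: "'a set set" and r :: 'a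
    and I :: "'i set" and VK :: "'i \<Rightarrow> 'a set" and EK :: "'i \<Rightarrow> 'a set set" and rK :: "'i \<Rightarrow> 'a"
    and t :: "'i \<Rightarrow> 'a"
  assumes base_tree: "is_tree V E" and root: "r \<in> V"
    and part_tree: "K \<in> I \<Longrightarrow> is_tree (VK K) (EK K)"
    and part_root: "K \<in> I \<Longrightarrow> rK K \<in> VK K"
    and part_disjoint_base: "K \<in> I \<Longrightarrow> VK K \<inter> V = {}"
    and parts_disjoint: "K \<in> I \<Longrightarrow> K' \<in> I \<Longrightarrow> x \<in> VK K \<Longrightarrow> x \<in> VK K' \<Longrightarrow> K = K'"
    and attach_in_base: "K \<in> I \<Longrightarrow> t K \<in> V"
begin

definition glued_vertices :: "'a set" where
  "glued_vertices = V \<union> (\<Union>K\<in>I. VK K)"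

definition glued_edges :: "'a set set" where
  "glued_edges = E \<union> (\<Union>K\<in>I. EK K) \<union> (\<lambda>K. {t K, rK K}) ` I"

abbreviation "V' \<equiv> glued_vertices"
abbreviation "E' \<equiv> glued_edges"

lemma glued_vertexE:
  assumes "x \<in> V'"
  obtains "x \<in> V" | K where "K \<in> I" "x \<in> VK K"
  using assms unfolding glued_vertices_def by blast

lemma part_not_base: "K \<in> I \<Longrightarrow> x \<in> VK K \<Longrightarrow> x \<notin> V"
  using part_disjoint_base by blast

lemma glued_edgeE:
  assumes "e \<in> E'"
  obtains "e \<in> E" | K where "K \<in> I" "e \<in> EK K" | K where "K \<in> I" "e = {t K, rK K}"
  using assms unfolding glued_edges_def by blast

lemma glued_edge_in_base:
  assumes e: "{x, y} \<in> E'" and xy: "x \<in> V" "y \<in> V"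
  shows "{x, y} \<in> E"
  using e
proof (cases rule: glued_edgeE)
  case (2 K)
  then show ?thesis
    using tree_edgeD[OF part_tree] part_not_base xy by (metis doubleton_eq_iff)
next
  case (3 K)
  then show ?thesis
    using part_root part_not_base xy by (metis doubleton_eq_iff)
qed

lemma glued_edge_in_part:
  assumes K: "K \<in> I" and e: "{x, y} \<in> E'" and xy: "x \<in> VK K" "y \<in> VK K"
  shows "{x, y} \<in> EK K"
  using e
proof (cases rule: glued_edgeE)
  case 1
  then show ?thesis
    using tree_edgeD[OF base_tree] part_not_base[OF K] xy by (metis doubleton_eq_iff)
next
  case (2 K')
  then have "x \<in> VK K'"
    using tree_edgeD[OF part_tree] by (metis doubleton_eq_iff)
  then show ?thesis
    using 2 parts_disjoint[OF K] K xy by metis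
next
  case (3 K')
  then have "t K' \<in> VK K"
    using xy by (metis doubleton_eq_iff)
  then show ?thesis
    using attach_in_base[OF 3(1)] part_not_base[OF K] by blast
qed

lemma glued_gate: "K \<in> I \<Longrightarrow> gate_edge E' (VK K) (rK K) (t K)"
  unfolding gate_edge_def
proof (intro allI impI)
  fix x y
  assume K: "K \<in> I" and e: "{x, y} \<in> E'" and x: "x \<in> VK K" and y: "y \<notin> VK K"
  from e show "x = rK K \<and> y = t K"
  proof (cases rule: glued_edgeE)
    case 1
    then show ?thesis
      using tree_edgeD[OF base_tree] part_not_base[OF K] x by (metis doubleton_eq_iff)
  next
    case (2 K')
    then have "x \<in> VK K'" "y \<in> VK K'"
      using tree_edgeD[OF part_tree] by (metis doubleton_eq_iff)+
    then show ?thesis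
      using 2 parts_disjoint[OF K] K x y by metis
  next
    case (3 K')
    then have "x = rK K' \<and> y = t K'"
      using attach_in_base part_not_base[OF K] x by (metis doubleton_eq_iff)
    then show ?thesis
      using 3 parts_disjoint[OF K] part_root x by metis
  qed
qed

lemma base_subset: "V \<subseteq> V'" "E \<subseteq> E'"
  unfolding glued_vertices_def glued_edges_def by auto

lemma part_subset: "K \<in> I \<Longrightarrow> VK K \<subseteq> V'" "K \<in> I \<Longrightarrow> EK K \<subseteq> E'"
  unfolding glued_vertices_def glued_edges_def by auto

lemma attach_edge: "K \<in> I \<Longrightarrow> {t K, rK K} \<in> E'"
  unfolding glued_edges_def by blast

lemma glued_path_in_base:
  assumes p: "gpath V' E' p" and ends: "hd p \<in> V" "last p \<in> V"
  shows "gpath V E p"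
proof -
  have "z \<in> V" if z: "z \<in> set p" for z
  proof -
    have "z \<in> V'"
      using p z unfolding gpath_def by blast
    then show ?thesis
    proof (cases rule: glued_vertexE)
      case (2 K)
      have "set p \<inter> VK K = {}"
        using gpath_stays_outside[OF glued_gate[OF 2(1)] p] part_not_base[OF 2(1)] ends by blast
      then show ?thesis
        using z 2(2) by blast
    qed
  qed
  then have "set p \<subseteq> V"
    by blast
  then show ?thesis
    using gpath_restrict[OF p _ glued_edge_in_base] by blast
qed

lemma glued_path_into_part:
  assumes K: "K \<in> I" and p: "gpath V' E' p" "hd p \<in> V" "last p \<in> VK K"
  obtains A B where "p = A @ B" "gpath V E A" "last A = t K" "gpath (VK K) (EK K) B" "hd B = rK K"
proof -
  obtain A B where AB: "p = A @ B" "A \<noteq> []" "B \<noteq> []" "set B \<subseteq> VK K" "last A = t K" "hd B = rK K"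
    using gpath_crosses_gate[OF glued_gate[OF K] p(1)] p(2,3) part_not_base[OF K] by metis
  have "gpath V' E' A" "gpath V' E' B"
    using gpath_appendD[of V' E' A B] p(1) AB(1-3) by simp_all
  moreover have "hd A = hd p"
    using AB(1,2) by simp
  ultimately have "gpath V E A" "gpath (VK K) (EK K) B"
    using glued_path_in_base p(2) AB(5) attach_in_base[OF K]
      gpath_restrict[OF _ AB(4) glued_edge_in_part[OF K]] by simp_all
  then show thesis
    using that AB by blast
qed

lemma gpath_glue:
  assumes K: "K \<in> I" and a: "gpath V E a" "last a = t K"
    and b: "gpath (VK K) (EK K) b" "hd b = rK K"
  shows "gpath V' E' (a @ b)"
proof (rule gpath_append)
  show "gpath V' E' a" "gpath V' E' b"
    using gpath_mono a(1) b(1) base_subset part_subset[OF K] by blast+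
  have "set a \<subseteq> V" "set b \<subseteq> VK K"
    using a(1) b(1) unfolding gpath_def by blast+
  then show "set a \<inter> set b = {}"
    using part_disjoint_base[OF K] by blast
  show "{last a, hd b} \<in> E'"
    using attach_edge[OF K] a(2) b(2) by simp
qed

lemma glued_path_from_root:
  assumes K: "K \<in> I" and x: "x \<in> VK K"
  obtains p where "gpath V' E' p" "hd p = r" "last p = x"
proof -
  obtain a where a: "gpath V E a" "hd a = r" "last a = t K"
    using base_tree root attach_in_base[OF K] unfolding is_tree_def by blast
  obtain b where b: "gpath (VK K) (EK K) b" "hd b = rK K" "last b = x"
    using part_tree[OF K] part_root[OF K] x unfolding is_tree_def by blast
  have "a \<noteq> []" "b \<noteq> []"
    using a(1) b(1) unfolding gpath_def by blast+
  then show thesis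
    using that gpath_glue[OF K a(1,3) b(1,2)] a(2) b(3) by simp
qed

lemma glued_reachable:
  assumes "x \<in> V'"
  shows "\<exists>p. gpath V' E' p \<and> hd p = r \<and> last p = x"
  using assms
proof (cases rule: glued_vertexE)
  case 1
  then show ?thesis
    using base_tree root gpath_mono base_subset unfolding is_tree_def by meson
next
  case (2 K)
  then show ?thesis
    using glued_path_from_root by metis
qed

lemma glued_ugraph: "ugraph V' E'"
  unfolding ugraph_def
proof
  fix e
  assume "e \<in> E'"
  then show "\<exists>x y. x \<noteq> y \<and> x \<in> V' \<and> y \<in> V' \<and> e = {x, y}"
  proof (cases rule: glued_edgeE)
    case 1
    then obtain x y where "x \<noteq> y" "x \<in> V" "y \<in> V" "e = {x, y}"
      using tree_edgeD[OF base_tree] by meson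
    then show ?thesis
      using base_subset(1) by auto
  next
    case (2 K)
    then obtain x y where "x \<noteq> y" "x \<in> VK K" "y \<in> VK K" "e = {x, y}"
      using tree_edgeD[OF part_tree] by meson
    then show ?thesis
      using part_subset(1)[OF 2(1)] by auto
  next
    case (3 K)
    have "t K \<noteq> rK K"
      using attach_in_base[OF 3(1)] part_not_base[OF 3(1) part_root[OF 3(1)]] by auto
    then show ?thesis
      using 3 attach_in_base[OF 3(1)] part_root[OF 3(1)] base_subset(1) part_subset(1)[OF 3(1)]
      by auto
  qed
qed

lemma glued_cycle_no_entry:
  assumes c: "gcycle V' E' c" and K: "K \<in> I" and ends: "hd c \<notin> VK K" "last c \<in> VK K"
  shows False
proof -
  have gc: "gpath V' E' c" "length c \<ge> 3" "{last c, hd c} \<in> E'"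
    using c unfolding gcycle_def by blast+
  txt \<open>Both the closing edge and the place where \<open>c\<close> enters \<open>VK K\<close> are the gate edge,
    so \<open>c\<close> consists of its two endpoints only.\<close>
  have closing: "last c = rK K" "hd c = t K"
    using gate_edgeD[OF glued_gate[OF K] gc(3) ends(2,1)] by blast+
  obtain A B where AB: "c = A @ B" "A \<noteq> []" "B \<noteq> []" "last A = t K" "hd B = rK K"
    using gpath_crosses_gate[OF glued_gate[OF K] gc(1) ends] by metis
  have "gpath V' E' A" "gpath V' E' B"
    using gpath_appendD[of V' E' A B] gc(1) AB(1-3) by simp_all
  moreover have "hd A = last A" "hd B = last B"
    using AB closing by simp_all
  ultimately have "A = [hd A]" "B = [hd B]"
    using gpath_hd_last_eq by blast+
  then have "length c = 2"
    using AB(1) by (metis append_Cons append_Nil length_Cons list.size(3) numeral_2_eq_2)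
  then show False
    using gc(2) by simp
qed

lemma glued_cycle_ends:
  assumes c: "gcycle V' E' c" and K: "K \<in> I"
  shows "hd c \<in> VK K \<longleftrightarrow> last c \<in> VK K"
proof -
  have "c \<noteq> []"
    using c unfolding gcycle_def gpath_def by blast
  then show ?thesis
    using glued_cycle_no_entry[OF c K] glued_cycle_no_entry[OF gcycle_rev[OF c] K]
    by (auto simp: hd_rev last_rev)
qed

lemma glued_acyclic: "\<not> gcycle V' E' c"
proof
  assume c: "gcycle V' E' c"
  have gc: "gpath V' E' c" "length c \<ge> 3" "{last c, hd c} \<in> E'"
    using c unfolding gcycle_def by blast+
  have ends: "hd c \<in> V'" "last c \<in> V'"
    using gpath_ends_in[OF gc(1)] by blast+
  show False
  proof (cases "\<exists>K\<in>I. hd c \<in> VK K")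
    case True
    then obtain K where K: "K \<in> I" "hd c \<in> VK K" "last c \<in> VK K"
      using glued_cycle_ends[OF c] by blast
    then have "set c \<subseteq> VK K"
      using gpath_stays_inside[OF glued_gate[OF K(1)] gc(1)] by blast
    then have "gpath (VK K) (EK K) c"
      using gpath_restrict[OF gc(1) _ glued_edge_in_part[OF K(1)]] by blast
    moreover have "{last c, hd c} \<in> EK K"
      using glued_edge_in_part[OF K(1) gc(3) K(3,2)] .
    ultimately have "gcycle (VK K) (EK K) c"
      using gc(2) unfolding gcycle_def by blast
    then show False
      using part_tree[OF K(1)] unfolding is_tree_def by blast
  next
    case False
    then have "hd c \<in> V" "last c \<in> V"
      using ends glued_cycle_ends[OF c] by (blast elim: glued_vertexE)+
    then have "gcycle V E c"
      using glued_path_in_base[OF gc(1)] glued_edge_in_base[OF gc(3)] gc(2) unfolding gcycle_def by blast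
    then show False
      using base_tree unfolding is_tree_def by blast
  qed
qed

lemma glued_is_tree: "is_tree V' E'"
  unfolding is_tree_def
  using glued_ugraph paths_from_root_connect[OF glued_reachable] glued_acyclic root base_subset
  by blast

lemma glued_tree_le_base:
  assumes y: "y \<in> V"
  shows "tree_le V' E' r x y \<longleftrightarrow> tree_le V E r x y"
proof
  assume "tree_le V' E' r x y"
  then obtain p where p: "gpath V' E' p" "hd p = r" "last p = y" "x \<in> set p"
    unfolding tree_le_def by blast
  then have "gpath V E p"
    using glued_path_in_base root y by simp
  then show "tree_le V E r x y"
    unfolding tree_le_def using p by blast
next
  assume "tree_le V E r x y"
  then obtain p where "gpath V E p" "hd p = r" "last p = y" "x \<in> set p"
    unfolding tree_le_def by blast
  then show "tree_le V' E' r x y"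
    unfolding tree_le_def using gpath_mono[OF _ base_subset] by blast
qed

lemma glued_tree_le_part:
  assumes K: "K \<in> I" and y: "y \<in> VK K"
  shows "tree_le V' E' r x y \<longleftrightarrow>
    tree_le V E r x (t K) \<or> tree_le (VK K) (EK K) (rK K) x y"
proof
  assume "tree_le V' E' r x y"
  then obtain p where p: "gpath V' E' p" "hd p = r" "last p = y" "x \<in> set p"
    unfolding tree_le_def by blast
  then obtain A B where AB: "p = A @ B" "gpath V E A" "last A = t K" "gpath (VK K) (EK K) B"
    "hd B = rK K"
    using glued_path_into_part[OF K p(1)] root y by metis
  have "A \<noteq> []" "B \<noteq> []"
    using AB(2,4) unfolding gpath_def by blast+
  then have "hd A = r" "last B = y"
    using AB(1) p(2,3) by simp_all
  then show "tree_le V E r x (t K) \<or> tree_le (VK K) (EK K) (rK K) x y"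
    using AB p(4) unfolding tree_le_def by auto
next
  obtain a where a: "gpath V E a" "hd a = r" "last a = t K"
    using base_tree root attach_in_base[OF K] unfolding is_tree_def by blast
  obtain b where b: "gpath (VK K) (EK K) b" "hd b = rK K" "last b = y"
    using part_tree[OF K] part_root[OF K] y unfolding is_tree_def by blast
  have glue_ends: "hd (a' @ b') = r" "last (a' @ b') = y"
    if "gpath V E a'" "hd a' = r" "gpath (VK K) (EK K) b'" "last b' = y" for a' b'
    using that unfolding gpath_def by simp_all
  assume "tree_le V E r x (t K) \<or> tree_le (VK K) (EK K) (rK K) x y"
  then show "tree_le V' E' r x y"
  proof
    assume "tree_le V E r x (t K)"
    then obtain a' where "gpath V E a'" "hd a' = r" "last a' = t K" "x \<in> set a'"
      unfolding tree_le_def by blast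
    then show ?thesis
      unfolding tree_le_def using gpath_glue[OF K _ _ b(1,2)] glue_ends b by fastforce
  next
    assume "tree_le (VK K) (EK K) (rK K) x y"
    then obtain b' where "gpath (VK K) (EK K) b'" "hd b' = rK K" "last b' = y" "x \<in> set b'"
      unfolding tree_le_def by blast
    then show ?thesis
      unfolding tree_le_def using gpath_glue[OF K a(1,3)] glue_ends a by fastforce
  qed
qed

lemma glued_down_open_base:
  assumes u: "u \<in> V"
  shows "down_open V' E' r u = down_open V E r u"
proof -
  have "x \<in> V' \<and> tree_le V' E' r x u \<longleftrightarrow> x \<in> V \<and> tree_le V E r x u" for x
    using glued_tree_le_base[OF u, of x] tree_le_in_V[of V E r x u] base_subset(1) by auto
  then show ?thesis
    unfolding down_open_def by auto
qed

lemma glued_down_open_part: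
  assumes K: "K \<in> I" and u: "u \<in> VK K"
  shows "down_open V' E' r u \<subseteq> V \<union> down_open (VK K) (EK K) (rK K) u"
proof -
  have "x \<in> V \<or> x \<in> VK K \<and> tree_le (VK K) (EK K) (rK K) x u" if "tree_le V' E' r x u" for x
    using glued_tree_le_part[OF K u, of x] that tree_le_in_V[of V E r x "t K"]
      tree_le_in_V[of "VK K" "EK K" "rK K" x u] by auto
  then show ?thesis
    unfolding down_open_def by auto
qed

lemma glued_ray_stays_in_part:
  assumes R: "is_ray V' E' R" and K: "K \<in> I" and out: "R 0 \<notin> VK K"
    and n: "R n \<in> VK K" "n \<le> m"
  shows "R m \<in> VK K"
proof (rule ccontr)
  assume "R m \<notin> VK K"
  then have "set (map R [0..<Suc m]) \<inter> VK K = {}"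
    using gpath_stays_outside[OF glued_gate[OF K] ray_prefix_gpath(1)[OF R]]
      ray_prefix_gpath(2,3)[OF R] out by simp
  moreover have "R n \<in> set (map R [0..<Suc m])"
    using ray_prefix_gpath(4)[OF R] n(2) by simp
  ultimately show False
    using n(1) by blast
qed

lemma glued_ray_from_base:
  assumes R: "is_ray V' E' R" and R0: "R 0 \<in> V"
  shows "is_ray V E R \<or> (\<exists>K\<in>I. \<exists>j. R j = rK K \<and> is_ray (VK K) (EK K) (\<lambda>i. R (j + i)))"
proof (cases "range R \<subseteq> V")
  case True
  then show ?thesis
    using is_ray_restrict[OF R True glued_edge_in_base] by blast
next
  case False
  then obtain n where "R n \<notin> V" "R n \<in> V'"
    using R unfolding is_ray_def by blast
  then obtain K where K: "K \<in> I" "R n \<in> VK K"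
    using glued_vertexE by metis
  define j where "j = (LEAST j. R j \<in> VK K)"
  have j: "R j \<in> VK K"
    unfolding j_def using K(2) by (rule LeastI)
  have out: "R 0 \<notin> VK K"
    using R0 part_not_base[OF K(1)] by blast
  then have "j \<noteq> 0"
    using j by (metis)
  then have "R (j - 1) \<notin> VK K"
    using not_less_Least[of "j - 1" "\<lambda>j. R j \<in> VK K"] unfolding j_def by simp
  then have "R j = rK K"
    using gate_edgeD[OF glued_gate[OF K(1)] ray_edge_before(2)[OF R \<open>j \<noteq> 0\<close>] j] by blast
  moreover have "range (\<lambda>i. R (j + i)) \<subseteq> VK K"
    using glued_ray_stays_in_part[OF R K(1) out j] by auto
  then have "is_ray (VK K) (EK K) (\<lambda>i. R (j + i))"
    using is_ray_restrict[OF is_ray_shift[OF R] _ glued_edge_in_part[OF K(1)]] by blast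
  ultimately show ?thesis
    using K(1) by blast
qed

lemma glued_ray_leaves_part:
  assumes R: "is_ray V' E' R" and K: "K \<in> I" and R0: "R 0 \<in> VK K"
    and leaves: "\<not> range R \<subseteq> VK K"
  shows "\<exists>j. R j \<in> V"
proof -
  define j where "j = (LEAST j. R j \<notin> VK K)"
  obtain n where "R n \<notin> VK K"
    using leaves by blast
  then have j: "R j \<notin> VK K"
    unfolding j_def by (rule LeastI[of "\<lambda>j. R j \<notin> VK K"])
  then have "j \<noteq> 0"
    using R0 by metis
  then have "R (j - 1) \<in> VK K"
    using not_less_Least[of "j - 1" "\<lambda>j. R j \<notin> VK K"] unfolding j_def by simp
  then have "R j = t K"
    using gate_edgeD[OF glued_gate[OF K] ray_edge_before(1)[OF R \<open>j \<noteq> 0\<close>] _ j] by blast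
  then show ?thesis
    using attach_in_base[OF K] by metis
qed

lemma glued_rayless:
  assumes base: "rayless V E" and parts: "\<forall>K\<in>I. rayless (VK K) (EK K)"
  shows "rayless V' E'"
  unfolding rayless_def
proof
  assume "\<exists>R. is_ray V' E' R"
  then obtain R where R: "is_ray V' E' R"
    by blast
  have "R 0 \<in> V'"
    using R unfolding is_ray_def by blast
  then have "\<exists>j. R j \<in> V"
  proof (cases rule: glued_vertexE)
    case (2 K)
    have "\<not> range R \<subseteq> VK K"
      using is_ray_restrict[OF R _ glued_edge_in_part[OF 2(1)]] parts 2(1) unfolding rayless_def by blast
    then show ?thesis
      using glued_ray_leaves_part[OF R 2] by blast
  qed blast
  then obtain j where "R j \<in> V"
    by blast
  then show False
    using glued_ray_from_base[OF is_ray_shift[OF R, of j]] base parts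
    unfolding rayless_def by (auto simp: add.assoc)
qed

lemma glued_vertices_diff: "V' - V = (\<Union>K\<in>I. VK K)"
  unfolding glued_vertices_def using part_disjoint_base by blast

lemma glued_edges_off_base: "{e \<in> E'. e \<inter> V = {}} = (\<Union>K\<in>I. EK K)"
proof
  show "{e \<in> E'. e \<inter> V = {}} \<subseteq> (\<Union>K\<in>I. EK K)"
  proof
    fix e
    assume e: "e \<in> {e \<in> E'. e \<inter> V = {}}"
    then have "e \<in> E'" "e \<inter> V = {}"
      by simp_all
    then show "e \<in> (\<Union>K\<in>I. EK K)"
    proof (cases rule: glued_edgeE)
      case 1
      then show ?thesis
        using tree_edgeD[OF base_tree] \<open>e \<inter> V = {}\<close> by blast
    next
      case (3 K)
      then show ?thesis
        using attach_in_base[OF 3(1)] \<open>e \<inter> V = {}\<close> by blast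
    qed blast
  qed
  show "(\<Union>K\<in>I. EK K) \<subseteq> {e \<in> E'. e \<inter> V = {}}"
  proof
    fix e
    assume "e \<in> (\<Union>K\<in>I. EK K)"
    then obtain K where K: "K \<in> I" "e \<in> EK K"
      by blast
    then obtain x y where "x \<in> VK K" "y \<in> VK K" "e = {x, y}"
      using tree_edgeD[OF part_tree] by meson
    then show "e \<in> {e \<in> E'. e \<inter> V = {}}"
      using K part_subset(2)[OF K(1)] part_disjoint_base[OF K(1)] by auto
  qed
qed

end

section \<open>Gluing normal trees\<close>

lemma necklace_mono: "necklace CC N \<Longrightarrow> CC \<subseteq> CC' \<Longrightarrow> necklace CC' N"
  unfolding necklace_def by blast

lemma finite_Collect_shift:
  fixes j :: nat
  assumes "finite {i. P (j + i)}"
  shows "finite {n. P n}"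
proof (rule finite_subset)
  show "{n. P n} \<subseteq> {..<j} \<union> (\<lambda>i. j + i) ` {i. P (j + i)}"
  proof
    fix n
    assume "n \<in> {n. P n}"
    then show "n \<in> {..<j} \<union> (\<lambda>i. j + i) ` {i. P (j + i)}"
      by (cases "n < j") (auto simp: image_iff intro: exI[of _ "n - j"])
  qed
  show "finite ({..<j} \<union> (\<lambda>i. j + i) ` {i. P (j + i)})"
    using assms by simp
qed

lemma normal_tree_weak: "normal_tree S CC V E r \<Longrightarrow> weak_normal_tree S CC V E r"
  unfolding normal_tree_def by blast

lemma normal_tree_necklace:
  "normal_tree S CC V E r \<Longrightarrow> rooted_ray V E r R \<Longrightarrow> \<exists>N. necklace CC N \<and> finite {n. R n \<notin> N}"
  unfolding normal_tree_def by blast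

locale normal_tree_gluing =
  fixes S :: "'a set" and F :: "'a set set"
    and V :: "'a set" and E :: "'a set set" and r :: 'a
    and I :: "'a set set" and VK :: "'a set \<Rightarrow> 'a set" and EK :: "'a set \<Rightarrow> 'a set set"
    and rK :: "'a set \<Rightarrow> 'a" and t :: "'a set \<Rightarrow> 'a"
  assumes conn: "connectoid S F"
    and base_normal: "normal_tree S (conn_sets S F) V E r"
    and parts_components: "I \<subseteq> components (conn_sets S F) (S - V)"
    and part_normal: "K \<in> I \<Longrightarrow> normal_tree K (conn_sets S F \<inter> Pow K) (VK K) (EK K) (rK K)"
    and attachment: "K \<in> I \<Longrightarrow> attachment_point (conn_sets S F) V E r K (t K)"
begin

abbreviation "CC \<equiv> conn_sets S F"

lemma attach_realised: "K \<in> I \<Longrightarrow> \<exists>C\<in>CC. K \<subset> C \<and> tree_min V E r (C \<inter> V) = t K"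
  using attachment unfolding attachment_point_def by blast

lemma attach_above:
  "K \<in> I \<Longrightarrow> C \<in> CC \<Longrightarrow> K \<subset> C \<Longrightarrow> tree_le V E r (tree_min V E r (C \<inter> V)) (t K)"
  using attachment unfolding attachment_point_def by blast

lemma base_weak: "weak_normal_tree S CC V E r"
  using base_normal by (rule normal_tree_weak)

lemma part_weak: "K \<in> I \<Longrightarrow> weak_normal_tree K (CC \<inter> Pow K) (VK K) (EK K) (rK K)"
  using part_normal by (rule normal_tree_weak)

lemma part_component: "K \<in> I \<Longrightarrow> K \<in> components CC (S - V)"
  using parts_components by blast

lemma part_in_component: "K \<in> I \<Longrightarrow> VK K \<subseteq> K"
  using weak_normal_tree_rooted(3)[OF part_weak] .

sublocale tree_gluing V E r I VK EK rK t
proof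
  show "is_tree V E" "r \<in> V"
    using weak_normal_tree_rooted[OF base_weak] by blast+
  fix K
  assume K: "K \<in> I"
  show "is_tree (VK K) (EK K)" "rK K \<in> VK K"
    using weak_normal_tree_rooted[OF part_weak[OF K]] by blast+
  show "VK K \<inter> V = {}"
    using part_in_component[OF K] componentsD(2)[OF part_component[OF K]] by blast
  show "t K \<in> V"
    using attachment[OF K] unfolding attachment_point_def by blast
  fix K' x
  assume "K' \<in> I" "x \<in> VK K" "x \<in> VK K'"
  then show "K = K'"
    using components_disjoint[OF conn part_component[OF K] part_component[OF \<open>K' \<in> I\<close>]]
      part_in_component[OF K] part_in_component[OF \<open>K' \<in> I\<close>] by blast
qed

lemma glued_vertex_in_part:
  assumes K: "K \<in> I" and x: "x \<in> V'" "x \<in> K"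
  shows "x \<in> VK K"
  using x(1)
proof (cases rule: glued_vertexE)
  case 1
  then show ?thesis
    using x(2) componentsD(2)[OF part_component[OF K]] by blast
next
  case (2 K')
  then have "K' = K"
    using components_disjoint[OF conn part_component[OF K] part_component[OF 2(1)]]
      part_in_component[OF 2(1)] x(2) by blast
  then show ?thesis
    using 2(2) by simp
qed

lemma glued_vertices_subset: "V' \<subseteq> S"
proof
  fix x
  assume "x \<in> V'"
  then show "x \<in> S"
  proof (cases rule: glued_vertexE)
    case 1
    then show ?thesis
      using weak_normal_tree_rooted(3)[OF base_weak] by blast
  next
    case (2 K)
    then show ?thesis
      using part_in_component[OF 2(1)] componentsD(2)[OF part_component[OF 2(1)]] by blast
  qed
qed

lemma tree_min_below_glued:
  assumes C: "C \<in> CC" and not_in_part: "\<forall>K\<in>I. \<not> C \<subseteq> K" and y: "y \<in> C" "y \<in> V'"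
  shows "C \<inter> V \<noteq> {}" "tree_le V' E' r (tree_min V E r (C \<inter> V)) y"
proof -
  have "C \<inter> V \<noteq> {} \<and> tree_le V' E' r (tree_min V E r (C \<inter> V)) y"
    using y(2)
  proof (cases rule: glued_vertexE)
    case 1
    then show ?thesis
      using weak_normal_tree_min(2)[OF base_weak C] y(1) glued_tree_le_base by blast
  next
    case (2 K)
    have K: "K \<in> components CC (S - V)"
      using part_component[OF 2(1)] .
    have "K \<union> C \<in> CC"
      using conn_sets_Un[OF conn componentsD(3)[OF K] C] y(1) 2(2) part_in_component[OF 2(1)]
      by blast
    moreover have "K \<subset> K \<union> C"
      using not_in_part 2(1) by blast
    moreover have "(K \<union> C) \<inter> V = C \<inter> V"
      using componentsD(2)[OF K] by blast
    ultimately have "C \<inter> V \<noteq> {}" "tree_le V E r (tree_min V E r (C \<inter> V)) (t K)"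
      using component_proper_superset_meets[OF K] attach_above[OF 2(1)] by metis+
    then show ?thesis
      using glued_tree_le_part[OF 2] by blast
  qed
  then show "C \<inter> V \<noteq> {}" "tree_le V' E' r (tree_min V E r (C \<inter> V)) y"
    by blast+
qed

lemma glued_common_lower_bound:
  assumes C: "C \<in> CC" and u: "u \<in> C" "u \<in> V'" and v: "v \<in> C" "v \<in> V'"
    and incomparable: "\<not> tree_le V' E' r u v" "\<not> tree_le V' E' r v u"
  shows "\<exists>w\<in>C. tree_le V' E' r w u \<and> tree_le V' E' r w v"
proof (cases "\<exists>K\<in>I. C \<subseteq> K")
  case True
  then obtain K where K: "K \<in> I" "C \<subseteq> K"
    by blast
  have uv: "u \<in> C \<inter> VK K" "v \<in> C \<inter> VK K"
    using glued_vertex_in_part[OF K(1)] u v K(2) by blast+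
  have lift: "tree_le V' E' r x y" if xy: "tree_le (VK K) (EK K) (rK K) x y" for x y
  proof -
    have "y \<in> VK K"
      using tree_le_in_V[OF xy] by simp
    then show ?thesis
      using glued_tree_le_part[OF K(1)] xy by simp
  qed
  have "C \<in> CC \<inter> Pow K"
    using C K(2) by blast
  moreover have "\<not> tree_le (VK K) (EK K) (rK K) u v" "\<not> tree_le (VK K) (EK K) (rK K) v u"
    using lift incomparable by blast+
  ultimately obtain w where "w \<in> C" "tree_le (VK K) (EK K) (rK K) w u"
    "tree_le (VK K) (EK K) (rK K) w v"
    using weak_normal_tree_common_lower_bound[OF part_weak[OF K(1)] _ uv] by blast
  then show ?thesis
    using lift by blast
next
  case False
  then have not_in_part: "\<forall>K\<in>I. \<not> C \<subseteq> K"
    by blast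
  have "tree_min V E r (C \<inter> V) \<in> C"
    using weak_normal_tree_min(1)[OF base_weak C tree_min_below_glued(1)[OF C not_in_part u]] by blast
  then show ?thesis
    using tree_min_below_glued(2)[OF C not_in_part] u v by blast
qed

lemma separating_set_through_attachment:
  assumes K: "K \<in> I" and u_below: "tree_le V E r u (t K)" and v: "v \<in> K"
  shows "\<exists>C\<in>CC. u \<in> C \<and> v \<in> C \<and> C \<inter> down_open V E r u = {}"
proof -
  note tree = weak_normal_tree_rooted(1,2)[OF base_weak]
  obtain C1 where C1: "C1 \<in> CC" "u \<in> C1" "t K \<in> C1" "C1 \<inter> down_open V E r u = {}"
    using weak_normal_tree_separating_set[OF base_weak u_below] by blast
  obtain C2 where C2: "C2 \<in> CC" "K \<subset> C2" "tree_min V E r (C2 \<inter> V) = t K"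
    using attach_realised[OF K] by blast
  have C2_meets: "C2 \<inter> V \<noteq> {}"
    using component_proper_superset_meets[OF part_component[OF K] C2(1,2)] .
  have "t K \<in> C2"
    using weak_normal_tree_min(1)[OF base_weak C2(1) C2_meets] C2(3) by simp
  then have "C1 \<union> C2 \<in> CC"
    using conn_sets_Un[OF conn C1(1) C2(1)] C1(3) by blast
  moreover have "v \<in> C2"
    using v C2(2) by blast
  moreover have "C2 \<inter> down_open V E r u = {}"
  proof -
    have "tree_le V E r u z" if "z \<in> C2 \<inter> V" for z
      using weak_normal_tree_min(2)[OF base_weak C2(1) C2_meets] that C2(3) u_below
        tree_le_trans[OF tree] by metis
    then show ?thesis
      unfolding down_open_def using tree_le_antisym[OF tree] by blast
  qed
  ultimately show ?thesis
    using C1 by blast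
qed

lemma glued_separating_set:
  assumes uv: "tree_le V' E' r u v"
  shows "\<exists>C\<in>CC. u \<in> C \<and> v \<in> C \<and> C \<inter> down_open V' E' r u = {}"
proof -
  have "v \<in> V'"
    using tree_le_in_V[OF uv] by blast
  then show ?thesis
  proof (cases rule: glued_vertexE)
    case 1
    then have le: "tree_le V E r u v"
      using uv glued_tree_le_base by simp
    then have "u \<in> V"
      using tree_le_in_V[OF le] by blast
    then show ?thesis
      using weak_normal_tree_separating_set[OF base_weak le] glued_down_open_base by simp
  next
    case (2 K)
    have "tree_le V E r u (t K) \<or> tree_le (VK K) (EK K) (rK K) u v"
      using uv glued_tree_le_part[OF 2] by blast
    then show ?thesis
    proof
      assume u_below: "tree_le V E r u (t K)"
      then have "u \<in> V"
        using tree_le_in_V[OF u_below] by blast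
      moreover obtain C where "C \<in> CC" "u \<in> C" "v \<in> C" "C \<inter> down_open V E r u = {}"
        using separating_set_through_attachment[OF 2(1) u_below] 2(2) part_in_component[OF 2(1)]
        by blast
      ultimately show ?thesis
        using glued_down_open_base by auto
    next
      assume le: "tree_le (VK K) (EK K) (rK K) u v"
      then obtain C where C: "C \<in> CC \<inter> Pow K" "u \<in> C" "v \<in> C"
        "C \<inter> down_open (VK K) (EK K) (rK K) u = {}"
        using weak_normal_tree_separating_set[OF part_weak[OF 2(1)]] by blast
      have "C \<inter> V = {}"
        using C(1) componentsD(2)[OF part_component[OF 2(1)]] by blast
      moreover have "u \<in> VK K"
        using tree_le_in_V[OF le] by blast
      ultimately have "C \<inter> down_open V' E' r u = {}"
        using C(4) glued_down_open_part[OF 2(1)] by blast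
      then show ?thesis
        using C(1-3) by blast
    qed
  qed
qed

lemma glued_rays_in_necklaces:
  assumes R: "rooted_ray V' E' r R"
  shows "\<exists>N. necklace CC N \<and> finite {n. R n \<notin> N}"
proof -
  have ray: "is_ray V' E' R" and R0: "R 0 = r"
    using R unfolding rooted_ray_def by blast+
  from glued_ray_from_base[OF ray] R0 root
  consider "is_ray V E R" | K j where "K \<in> I" "R j = rK K" "is_ray (VK K) (EK K) (\<lambda>i. R (j + i))"
    by auto
  then show ?thesis
  proof cases
    case 1
    then show ?thesis
      using normal_tree_necklace[OF base_normal] R0 unfolding rooted_ray_def by blast
  next
    case (2 K j)
    then obtain N where N: "necklace (CC \<inter> Pow K) N" "finite {i. R (j + i) \<notin> N}"
      using normal_tree_necklace[OF part_normal[OF 2(1)]] unfolding rooted_ray_def by fastforce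
    have "necklace CC N"
      using necklace_mono[OF N(1) Int_lower1] .
    moreover have "finite {n. R n \<notin> N}"
      using finite_Collect_shift[of "\<lambda>n. R n \<notin> N" j] N(2) by simp
    ultimately show ?thesis
      by blast
  qed
qed

lemma glued_normal_tree: "normal_tree S CC V' E' r"
  unfolding normal_tree_def weak_normal_tree_def rooted_tree_def
proof (intro conjI ballI impI allI)
  show "is_tree V' E'" "r \<in> V'" "V' \<subseteq> S"
    using glued_is_tree root base_subset glued_vertices_subset by blast+
  show "\<exists>w\<in>C. tree_le V' E' r w u \<and> tree_le V' E' r w v"
    if "C \<in> CC" "u \<in> C \<inter> V'" "v \<in> C \<inter> V'" "\<not> tree_le V' E' r u v \<and> \<not> tree_le V' E' r v u"
    for C u v
    using glued_common_lower_bound that by blast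
  show "\<exists>C\<in>CC. u \<in> C \<and> v \<in> C \<and> C \<inter> down_open V' E' r u = {}" if "tree_le V' E' r u v" for u v
    using glued_separating_set that by blast
  show "\<exists>N. necklace CC N \<and> finite {n. R n \<notin> N}" if "rooted_ray V' E' r R" for R
    using glued_rays_in_necklaces that by blast
qed

end

theorem proposition6p3:
  fixes S :: "'a set" and F :: "'a set set"
    and V :: "'a set" and E :: "'a set set" and r :: 'a
    and VK :: "'a set \<Rightarrow> 'a set" and EK :: "'a set \<Rightarrow> 'a set set" and rK :: "'a set \<Rightarrow> 'a"
  assumes conn: "connectoid S F"
    and S_conn: "S \<in> conn_sets S F"
    and T_normal: "normal_tree S (conn_sets S F) V E r"
    and adhesion: "\<forall>K\<in>components (conn_sets S F) (S - V).
                     finite_adhesion (conn_sets S F) S V K"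
    and TK_normal: "\<forall>K\<in>components (conn_sets S F) (S - V).
                     (VK K = {} \<and> EK K = {}) \<or>
                     normal_tree K (conn_sets S F \<inter> Pow K) (VK K) (EK K) (rK K)"
  shows "\<exists>V' E'. normal_tree S (conn_sets S F) V' E' r \<and> V \<subseteq> V' \<and> E \<subseteq> E' \<and>
           V' - V = (\<Union>K\<in>components (conn_sets S F) (S - V). VK K) \<and>
           {e\<in>E'. e \<inter> V = {}} = (\<Union>K\<in>components (conn_sets S F) (S - V). EK K) \<and>
           ((rayless V E \<and> (\<forall>K\<in>components (conn_sets S F) (S - V). rayless (VK K) (EK K)))
              \<longrightarrow> rayless V' E')"
proof -
  let ?comps = "components (conn_sets S F) (S - V)"
  define I where "I = {K \<in> ?comps. VK K \<noteq> {}}"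
  have "\<forall>K\<in>?comps. \<exists>t. attachment_point (conn_sets S F) V E r K t"
    using attachment_point_exists[OF conn S_conn normal_tree_weak[OF T_normal]] adhesion by blast
  then obtain t where t: "\<forall>K\<in>?comps. attachment_point (conn_sets S F) V E r K (t K)"
    using bchoice by blast
  have empty_parts: "EK K = {}" if "K \<in> ?comps" "VK K = {}" for K
    using TK_normal that unfolding normal_tree_def weak_normal_tree_def rooted_tree_def by blast
  interpret normal_tree_gluing S F V E r I VK EK rK t
    using conn T_normal TK_normal t unfolding I_def by unfold_locales auto
  have "(\<Union>K\<in>?comps. VK K) = (\<Union>K\<in>I. VK K)" "(\<Union>K\<in>?comps. EK K) = (\<Union>K\<in>I. EK K)"
    using empty_parts unfolding I_def by auto
  moreover have "rayless V E \<and> (\<forall>K\<in>?comps. rayless (VK K) (EK K)) \<longrightarrow> rayless V' E'"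
    using glued_rayless unfolding I_def by blast
  ultimately show ?thesis
    using glued_normal_tree base_subset glued_vertices_diff glued_edges_off_base
    by (intro exI[of _ V'] exI[of _ E']) auto
qed

end
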